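(* Let $\mathcal{M}^2$ be the set of all maskable observables on $\mathbb{C}^2$, i.e. Hermitian $2\times2$ matrices $\mathcal{O}$ for which there exists some quantum channel $\mathcal{E}$ with $\mathcal{E}^*(\mathcal{O})=\mathbb{I}$. Then there is no single quantum channel $\mathcal{E}$ on $2\times 2$ matrices such that $\mathcal{E}^*(\mathcal{O})=\mathbb{I}$ for all $\mathcal{O}\in\mathcal{M}^2$.
   Context: A quantum channel $\mathcal{E}$ is a linear completely positive trace-preserving map on $d\times d$ complex matrices, $\mathcal{E}(\rho)=\sum_i E_i\rho E_i^\dagger$ with $\sum_i E_i^\dagger E_i=\mathbb{I}$; its adjoint is $\mathcal{E}^*(X)=\sum_i E_i^\dagger X E_i$, so that $\operatorname{Tr}(\mathcal{E}(\rho)X)=\operatorname{Tr}(\rho\,\mathcal{E}^*(X))$. An observable is a Hermitian matrix. *)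

theory Defs
  imports "HOL-Analysis.Analysis"
begin

definition mat_adj :: "complex^'n^'m \<Rightarrow> complex^'m^'n" where
  "mat_adj A = (\<chi> i j. cnj (A $ j $ i))"

definition hermitian :: "complex^'n^'n \<Rightarrow> bool" where
  "hermitian A \<longleftrightarrow> mat_adj A = A"

text \<open>A quantum channel given by a (finite) list of Kraus operators
  with sum of E_i^dagger E_i equal to the identity.\<close>
definition is_channel :: "(complex^'n^'n) list \<Rightarrow> bool" where
  "is_channel Es \<longleftrightarrow> (\<Sum>E\<leftarrow>Es. mat_adj E ** E) = mat 1"

definition channel_apply :: "(complex^'n^'n) list \<Rightarrow> complex^'n^'n \<Rightarrow> complex^'n^'n" where
  "channel_apply Es \<rho> = (\<Sum>E\<leftarrow>Es. E ** \<rho> ** mat_adj E)"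

definition channel_adj :: "(complex^'n^'n) list \<Rightarrow> complex^'n^'n \<Rightarrow> complex^'n^'n" where
  "channel_adj Es X = (\<Sum>E\<leftarrow>Es. mat_adj E ** X ** E)"

definition maskable :: "complex^'n^'n \<Rightarrow> bool" where
  "maskable Ob \<longleftrightarrow> hermitian Ob \<and> (\<exists>Es. is_channel Es \<and> channel_adj Es Ob = mat 1)"

end

theory Submission
  imports Defs
begin

text \<open>Every diagonal matrix unit \<open>|k\<rangle>\<langle>k|\<close> is maskable, by the channel with Kraus
  operators \<open>|k\<rangle>\<langle>l|\<close>. These projectors sum to the identity, so by linearity a
  single channel masking all of them would map the identity to \<open>n\<close> times the identity,
  whereas the adjoint of every channel is unital. This is absurd once the dimension \<open>n\<close>
  is at least 2.\<close>

lemma matrix_add_rdistrib: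
  fixes A B :: "'a::semiring_1^'n^'m" and C :: "'a^'p^'n"
  shows "(A + B) ** C = A ** C + B ** C"
  by (simp add: matrix_matrix_mult_def vec_eq_iff sum.distrib[symmetric] distrib_right)

lemma channel_adj_add: "channel_adj Es (A + B) = channel_adj Es A + channel_adj Es B"
  unfolding channel_adj_def
  by (induction Es) (simp_all add: matrix_add_ldistrib matrix_add_rdistrib algebra_simps)

lemma channel_adj_zero: "channel_adj Es 0 = 0"
  unfolding channel_adj_def
  by (induction Es) (simp_all add: matrix_matrix_mult_def vec_eq_iff)

lemma channel_adj_sum:
  "channel_adj Es (\<Sum>k\<in>A. X k) = (\<Sum>k\<in>A. channel_adj Es (X k))"
  by (induction A rule: infinite_finite_induct) (simp_all add: channel_adj_zero channel_adj_add)

lemma channel_adj_mat_1: "is_channel Es \<Longrightarrow> channel_adj Es (mat 1) = mat 1"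
  unfolding channel_adj_def is_channel_def by simp

definition mat_unit :: "'n \<Rightarrow> 'm \<Rightarrow> 'a::zero_neq_one^'m^'n" where
  "mat_unit k l = (\<chi> i j. if i = k \<and> j = l then 1 else 0)"

lemma mat_adj_mat_unit: "mat_adj (mat_unit k l) = mat_unit l k"
  unfolding mat_adj_def mat_unit_def by (simp add: vec_eq_iff)

lemma mat_unit_mult:
  "(mat_unit i j :: 'a::semiring_1^'n^'m) ** (mat_unit k l :: 'a^'p^'n) =
     (if j = k then mat_unit i l else 0)"
  unfolding mat_unit_def matrix_matrix_mult_def
  by (simp add: vec_eq_iff if_distrib[of "\<lambda>x. x * _"] sum.delta cong: if_cong)

lemma sum_mat_unit_diag: "(\<Sum>k\<in>UNIV. mat_unit k k :: 'a::semiring_1^'n^'n) = mat 1"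
  unfolding mat_unit_def mat_def by (auto simp: vec_eq_iff sum_component intro: sum.neutral)

lemma maskable_mat_unit_diag: "maskable (mat_unit k k :: complex^'n^'n)"
proof -
  obtain ls :: "'n list" where ls: "distinct ls" "set ls = UNIV"
    using finite_distinct_list[of "UNIV :: 'n set"] by auto
  define Es where "Es = map (\<lambda>l. mat_unit k l :: complex^'n^'n) ls"
  have "is_channel Es"
    using ls sum_mat_unit_diag
    by (simp add: is_channel_def Es_def o_def sum_list_distinct_conv_sum_set
        mat_adj_mat_unit mat_unit_mult)
  moreover have "channel_adj Es (mat_unit k k) = mat 1"
    using ls sum_mat_unit_diag
    by (simp add: channel_adj_def Es_def o_def sum_list_distinct_conv_sum_set
        mat_adj_mat_unit mat_unit_mult)
  moreover have "hermitian (mat_unit k k :: complex^'n^'n)"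
    by (simp add: hermitian_def mat_adj_mat_unit)
  ultimately show ?thesis
    unfolding maskable_def by blast
qed

theorem no_universal_masking_channel:
  assumes "CARD('n) \<ge> 2"
  shows "\<not> (\<exists>Es :: (complex^'n^'n) list. is_channel Es \<and>
            (\<forall>Ob. maskable Ob \<longrightarrow> channel_adj Es Ob = mat 1))"
proof
  assume "\<exists>Es :: (complex^'n^'n) list. is_channel Es \<and>
            (\<forall>Ob. maskable Ob \<longrightarrow> channel_adj Es Ob = mat 1)"
  then obtain Es :: "(complex^'n^'n) list"
    where "is_channel Es" and masks: "\<And>Ob. maskable Ob \<Longrightarrow> channel_adj Es Ob = mat 1"
    by blast
  then have "mat 1 = channel_adj Es (\<Sum>k\<in>UNIV. mat_unit k k)"
    by (simp add: sum_mat_unit_diag channel_adj_mat_1)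
  also have "\<dots> = (\<Sum>k\<in>(UNIV :: 'n set). mat 1)"
    by (simp add: channel_adj_sum masks maskable_mat_unit_diag)
  also have "\<dots> = real CARD('n) *\<^sub>R mat 1"
    by (rule sum_constant_scaleR)
  finally have "mat 1 = real CARD('n) *\<^sub>R (mat 1 :: complex^'n^'n)" .
  from arg_cong[OF this, of "\<lambda>A. A $ k $ k" for k] have "CARD('n) = 1"
    unfolding vector_scaleR_component by (simp add: mat_def scaleR_conv_of_real)
  with assms show False
    by simp
qed

theorem theorem2:
  shows "\<not> (\<exists>Es :: (complex^2^2) list. is_channel Es \<and>
            (\<forall>Ob :: complex^2^2. maskable Ob \<longrightarrow> channel_adj Es Ob = mat 1))"
  by (rule no_universal_masking_channel) simp

end
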